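(* Let $d\ge2$, let $\mathbf A,\mathbf B\in\overline{\mathbb Q}[t]$ be nonzero coprime polynomials such that $\mathbf c=\mathbf A/\mathbf B$ is nonconstant, and let $|\cdot|_v$ be an absolute value on $\overline{\mathbb Q}$. Then there is a constant $C$, depending only on $v$ and on the coefficients of $\mathbf A$ and $\mathbf B$, such that for every $\lambda_0\in\overline{\mathbb Q}^*$ with $\mathbf c(\lambda_0)\ne0,\infty$, $$\left|\lim_{n\to\infty}\frac{\log M_{n,v}}{d^n}-\frac{\log M_{2,v}}{d^2}\right|\le C,$$ where $M_{n,v}=\max\{|\mathbf A_{\mathbf c,n}(\lambda_0)|_v,|\mathbf B_{\mathbf c,n}(\lambda_0)|_v\}$.
   Context: The polynomials $\mathbf A_{\mathbf c,n},\mathbf B_{\mathbf c,n}$ are defined by: $\mathbf A_{\mathbf c,0}=\mathbf A$, $\mathbf B_{\mathbf c,0}=\mathbf B$; if $\mathbf A(0)\neq0$ then $\mathbf A_{\mathbf c,1}=\mathbf A^d+t\mathbf B^d$, $\mathbf B_{\mathbf c,1}=\mathbf A\mathbf B^{d-1}$, while if $\mathbf A(0)=0$ then $\mathbf A_{\mathbf c,1}=(\mathbf A^d+t\mathbf B^d)/t$, $\mathbf B_{\mathbf c,1}=\mathbf A\mathbf B^{d-1}/t$; for $n\ge1$, $\mathbf A_{\mathbf c,n+1}=\mathbf A_{\mathbf c,n}^d+t\mathbf B_{\mathbf c,n}^d$, $\mathbf B_{\mathbf c,n+1}=\mathbf A_{\mathbf c,n}\mathbf B_{\mathbf c,n}^{d-1}$.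 *)

theory Defs
  imports "HOL-Computational_Algebra.Computational_Algebra"
begin

text \<open>Qbar is modelled as the algebraic complex numbers; polynomials in Qbar[t]
  are complex polynomials all of whose coefficients are algebraic.\<close>

definition qbar_poly :: "complex poly \<Rightarrow> bool" where
  "qbar_poly p \<longleftrightarrow> (\<forall>i. algebraic (coeff p i))"

text \<open>An absolute value on Qbar (given as a function on complex numbers,
  of which only the values on algebraic numbers matter).\<close>

definition abs_value_qbar :: "(complex \<Rightarrow> real) \<Rightarrow> bool" where
  "abs_value_qbar v \<longleftrightarrow>
     (\<forall>x. algebraic x \<longrightarrow> v x \<ge> 0) \<and>
     (\<forall>x. algebraic x \<longrightarrow> (v x = 0 \<longleftrightarrow> x = 0)) \<and>
     (\<forall>x y. algebraic x \<longrightarrow> algebraic y \<longrightarrow> v (x * y) = v x * v y) \<and>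
     (\<forall>x y. algebraic x \<longrightarrow> algebraic y \<longrightarrow> v (x + y) \<le> v x + v y)"

fun ABc :: "nat \<Rightarrow> complex poly \<Rightarrow> complex poly \<Rightarrow> nat \<Rightarrow> complex poly \<times> complex poly" where
  "ABc d A B 0 = (A, B)"
| "ABc d A B (Suc 0) =
     (if poly A 0 \<noteq> 0
      then (A ^ d + [:0, 1:] * B ^ d, A * B ^ (d - 1))
      else ((A ^ d + [:0, 1:] * B ^ d) div [:0, 1:], (A * B ^ (d - 1)) div [:0, 1:]))"
| "ABc d A B (Suc (Suc n)) =
     (let (An, Bn) = ABc d A B (Suc n)
      in (An ^ d + [:0, 1:] * Bn ^ d, An * Bn ^ (d - 1)))"

definition Acn :: "nat \<Rightarrow> complex poly \<Rightarrow> complex poly \<Rightarrow> nat \<Rightarrow> complex poly" where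
  "Acn d A B n = fst (ABc d A B n)"

definition Bcn :: "nat \<Rightarrow> complex poly \<Rightarrow> complex poly \<Rightarrow> nat \<Rightarrow> complex poly" where
  "Bcn d A B n = snd (ABc d A B n)"

definition Mnv :: "(complex \<Rightarrow> real) \<Rightarrow> nat \<Rightarrow> complex poly \<Rightarrow> complex poly \<Rightarrow> complex \<Rightarrow> nat \<Rightarrow> real" where
  "Mnv v d A B lam n = max (v (poly (Acn d A B n) lam)) (v (poly (Bcn d A B n) lam))"

end

theory Submission
  imports Defs
begin

text \<open>
  Write a_n, b_n for the values of A_{c,n}, B_{c,n} at lam and M_n = max |a_n| |b_n|.
  From level one on, each step is the map (a, b) |-> (a^d + lam b^d, a b^{d-1}), and
  M_{n+1} agrees with M_n^d up to a factor Z_n. The limit is then a telescoping series whose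
  distance from log M_2 / d^2 is at most the sum of log Z_n / d^{n+1}, so it suffices to bound
  log Z_n by K + mu (d - 1/2)^n uniformly in lam.

  The reverse triangle inequality gives Z_n = 2 max |lam| |lam|^{-1}, which is uniform on any
  annulus. For small or large |lam| the first coordinate dominates: |b_n| <= exp (W (d - 1/2)^n) |a_n|
  near 0 and |lam| |b_n|^d <= 2^{dn} K |lam|^{-1} |a_n|^d near infinity, for as long as these bounds
  make a_n^d the dominant term; once they fail, |lam|^{-1} resp. |lam| is itself bounded by them.
  Both regimes start at level one: near 0 because A_{c,1}(0) \<noteq> 0 by coprimality, near
  infinity by comparing the degrees of A and B.
\<close>

section \<open>Algebraic numbers\<close>

text \<open>Complex numbers as a vector space over the rationals: a number is algebraic iff its
  powers span a finite-dimensional subspace, which yields closure under sums and products.\<close>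

definition rat_scale :: "rat \<Rightarrow> complex \<Rightarrow> complex" where
  "rat_scale q z = of_rat q * z"

interpretation Q: vector_space rat_scale
  by unfold_locales (auto simp: rat_scale_def algebra_simps of_rat_add of_rat_mult)

lemma Q_span_mult:
  assumes "w \<in> Q.span A" "\<And>a. a \<in> A \<Longrightarrow> c * a \<in> Q.span S"
  shows "c * w \<in> Q.span S"
  using assms(1)
proof (induction rule: Q.span_induct_alt)
  case base
  then show ?case by (simp add: Q.span_zero)
next
  case (step q x y)
  have "c * (rat_scale q x + y) = rat_scale q (c * x) + c * y"
    by (simp add: rat_scale_def algebra_simps)
  then show ?case using step assms(2) by (simp add: Q.span_add Q.span_scale)
qed

lemma algebraic_if_powers_dependent:
  assumes inj: "inj_on (\<lambda>i. z ^ i) I" and dep: "Q.dependent ((\<lambda>i. z ^ i) ` I)"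
  shows "algebraic z"
proof -
  obtain t u where t: "finite t" "t \<subseteq> (\<lambda>i. z ^ i) ` I" "(\<Sum>w\<in>t. rat_scale (u w) w) = 0"
    and nz: "\<exists>w\<in>t. u w \<noteq> 0"
    using dep unfolding Q.dependent_explicit by blast
  define J where "J = {i \<in> I. z ^ i \<in> t}"
  have tJ: "t = (\<lambda>i. z ^ i) ` J" using t(2) by (auto simp: J_def)
  have injJ: "inj_on (\<lambda>i. z ^ i) J" using inj by (rule inj_on_subset) (auto simp: J_def)
  have J: "finite J" using t(1) injJ by (simp add: tJ finite_image_iff)
  define c where "c i = (of_rat (u (z ^ i)) :: complex)" for i
  define p where "p = (\<Sum>i\<in>J. monom (c i) i)"
  have coeff_p: "coeff p k = (if k \<in> J then c k else 0)" for k
    using J by (simp add: p_def coeff_sum coeff_monom)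
  have "coeff p k \<in> \<rat>" for k by (simp add: coeff_p c_def)
  moreover have "p \<noteq> 0"
  proof -
    obtain i where "i \<in> J" "u (z ^ i) \<noteq> 0" using nz by (auto simp: tJ)
    then show ?thesis using coeff_p[of i] by (auto simp: c_def)
  qed
  moreover have "poly p z = (\<Sum>w\<in>t. rat_scale (u w) w)"
    using injJ by (simp add: p_def poly_sum poly_monom tJ sum.reindex c_def rat_scale_def)
  ultimately show ?thesis using t(3) by (intro algebraicI') auto
qed

lemma algebraic_if_mult_closed_span:
  assumes fin: "finite S" and one: "1 \<in> Q.span S" and closed: "\<And>s. s \<in> S \<Longrightarrow> z * s \<in> Q.span S"
  shows "algebraic z"
proof (cases "inj_on (\<lambda>i. z ^ i) {..card S}")
  case False
  then obtain i j where ij: "i \<noteq> j" "z ^ i = z ^ j" unfolding inj_on_def by auto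
  define p :: "complex poly" where "p = monom 1 i - monom 1 j"
  have "coeff p i = 1" using ij(1) by (simp add: p_def coeff_monom)
  then have "p \<noteq> 0" by auto
  moreover have "poly p z = 0" using ij(2) by (simp add: p_def poly_monom)
  ultimately show ?thesis by (intro algebraicI[of p]) (auto simp: p_def coeff_monom)
next
  case True
  have powers: "z ^ i \<in> Q.span S" for i
  proof (induction i)
    case (Suc i)
    then show ?case using Q_span_mult[OF Suc closed] by simp
  qed (use one in simp)
  have "Q.dependent ((\<lambda>i. z ^ i) ` {..card S})"
  proof (rule ccontr)
    assume "\<not> Q.dependent ((\<lambda>i. z ^ i) ` {..card S})"
    from Q.independent_span_bound[OF fin this] powers
    show False using True by (auto simp: card_image)
  qed
  then show ?thesis using True by (rule algebraic_if_powers_dependent[rotated])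
qed

lemma Q_span_Rats_mult: "q \<in> \<rat> \<Longrightarrow> y \<in> Q.span S \<Longrightarrow> q * y \<in> Q.span S"
  by (metis Q.span_scale Rats_cases rat_scale_def)

lemma algebraic_powers_in_finite_span:
  assumes "algebraic (x::complex)"
  obtains m where "\<And>k. x ^ k \<in> Q.span ((\<lambda>i. x ^ i) ` {..<m})"
proof -
  obtain p where p: "\<And>i. coeff p i \<in> \<rat>" "p \<noteq> 0" "poly p x = 0"
    using assms unfolding algebraic_altdef by blast
  define m where "m = degree p"
  define V where "V = Q.span ((\<lambda>i. x ^ i) ` {..<m})"
  have lc: "lead_coeff p * x ^ m = - (\<Sum>i<m. coeff p i * x ^ i)"
    using p(3) by (simp add: poly_altdef m_def lessThan_Suc_atMost[symmetric] eq_neg_iff_add_eq_0 add.commute)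
  have "x ^ m = lead_coeff p * x ^ m / lead_coeff p" using p(2) by simp
  also have "\<dots> = (\<Sum>i<m. (- coeff p i / lead_coeff p) * x ^ i)"
    unfolding lc by (simp add: sum_divide_distrib sum_negf[symmetric])
  finally have xm: "x ^ m = (\<Sum>i<m. (- coeff p i / lead_coeff p) * x ^ i)" .
  have "x ^ k \<in> V" for k
  proof (induction k rule: less_induct)
    case (less k)
    show ?case
    proof (cases "k < m")
      case True
      then show ?thesis by (auto simp: V_def intro: Q.span_base)
    next
      case False
      then have "x ^ k = x ^ (k - m) * x ^ m" by (simp flip: power_add)
      also have "\<dots> = (\<Sum>i<m. (- coeff p i / lead_coeff p) * x ^ (k - m + i))"
        by (simp add: xm sum_distrib_left power_add mult_ac)
      also have "\<dots> \<in> V"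
        unfolding V_def using less False p(1)
        by (intro Q.span_sum Q_span_Rats_mult Rats_divide Rats_minus_iff[THEN iffD2]) (auto simp: V_def)
      finally show ?thesis .
    qed
  qed
  then show ?thesis using that V_def by blast
qed

lemma algebraic_add_mult:
  assumes x: "algebraic (x::complex)" and y: "algebraic y"
  shows "algebraic (x + y)" and "algebraic (x * y)"
proof -
  obtain m where m: "\<And>k. x ^ k \<in> Q.span ((\<lambda>i. x ^ i) ` {..<m})"
    using algebraic_powers_in_finite_span[OF x] by blast
  obtain n where n: "\<And>k. y ^ k \<in> Q.span ((\<lambda>j. y ^ j) ` {..<n})"
    using algebraic_powers_in_finite_span[OF y] by blast
  define S where "S = (\<lambda>(i, j). x ^ i * y ^ j) ` ({..<m} \<times> {..<n})"
  have small: "y ^ j * x ^ i \<in> Q.span S" if "j < n" for i j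
    using m
  proof (rule Q_span_mult)
    fix a assume "a \<in> (\<lambda>i. x ^ i) ` {..<m}"
    then show "y ^ j * a \<in> Q.span S"
      using that by (auto simp: S_def mult.commute intro!: Q.span_base)
  qed
  have monomials: "x ^ i * y ^ j \<in> Q.span S" for i j
    using n by (rule Q_span_mult) (auto simp: small[unfolded mult.commute[of "y ^ _"]])
  have fin: "finite S" and one: "1 \<in> Q.span S"
    using monomials[of 0 0] by (simp_all add: S_def)
  have S_monomial: "\<exists>i j. s = x ^ i * y ^ j" if "s \<in> S" for s
    using that by (auto simp: S_def)
  show "algebraic (x + y)"
  proof (rule algebraic_if_mult_closed_span[OF fin one])
    fix s assume "s \<in> S"
    then obtain i j where "s = x ^ i * y ^ j" using S_monomial by blast
    then have "(x + y) * s = x ^ Suc i * y ^ j + x ^ i * y ^ Suc j" by (simp add: algebra_simps)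
    then show "(x + y) * s \<in> Q.span S" by (metis Q.span_add monomials)
  qed
  show "algebraic (x * y)"
  proof (rule algebraic_if_mult_closed_span[OF fin one])
    fix s assume "s \<in> S"
    then obtain i j where "s = x ^ i * y ^ j" using S_monomial by blast
    then have "(x * y) * s = x ^ Suc i * y ^ Suc j" by (simp add: algebra_simps)
    then show "(x * y) * s \<in> Q.span S" by (metis monomials)
  qed
qed

lemma algebraic_1 [simp]: "algebraic (1::complex)"
  by (rule rat_imp_algebraic) simp

lemma algebraic_power [simp]: "algebraic (x::complex) \<Longrightarrow> algebraic (x ^ n)"
  by (induction n) (auto simp: algebraic_add_mult)

lemma algebraic_sum:
  "(\<And>i. i \<in> I \<Longrightarrow> algebraic (f i :: complex)) \<Longrightarrow> algebraic (sum f I)"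
  by (induction I rule: infinite_finite_induct) (auto simp: algebraic_add_mult)

lemma qbar_poly_pCons [simp]: "qbar_poly (pCons a p) \<longleftrightarrow> algebraic a \<and> qbar_poly p"
  unfolding qbar_poly_def by (auto simp: coeff_pCons split: nat.splits)

lemma algebraic_poly [simp]: "qbar_poly p \<Longrightarrow> algebraic x \<Longrightarrow> algebraic (poly p x)"
  by (induction p rule: pCons_induct) (auto simp: algebraic_add_mult)

declare algebraic_add_mult [simp]

section \<open>Absolute values on algebraic numbers\<close>

locale abs_value =
  fixes v :: "complex \<Rightarrow> real"
  assumes abs_value: "abs_value_qbar v"
begin

lemma v_nonneg: "algebraic x \<Longrightarrow> 0 \<le> v x"
  and v_eq_0_iff: "algebraic x \<Longrightarrow> v x = 0 \<longleftrightarrow> x = 0"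
  and v_mult: "algebraic x \<Longrightarrow> algebraic y \<Longrightarrow> v (x * y) = v x * v y"
  and v_triangle: "algebraic x \<Longrightarrow> algebraic y \<Longrightarrow> v (x + y) \<le> v x + v y"
  using abs_value unfolding abs_value_qbar_def by blast+

lemma v_0 [simp]: "v 0 = 0"
  using v_eq_0_iff[of 0] by simp

lemma v_pos: "algebraic x \<Longrightarrow> x \<noteq> 0 \<Longrightarrow> 0 < v x"
  using v_nonneg v_eq_0_iff by force

lemma v_1 [simp]: "v 1 = 1"
  using v_mult[of 1 1] v_pos[of 1] by simp

lemma v_power: "algebraic x \<Longrightarrow> v (x ^ n) = v x ^ n"
  by (induction n) (simp_all add: v_mult)

lemma v_minus: "algebraic x \<Longrightarrow> v (- x) = v x"
proof -
  have "v (-1) ^ 2 = 1" using v_power[of "-1" 2] by simp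
  then have "v (-1) = 1" using v_nonneg[of "-1"] by (simp add: power2_eq_1_iff)
  then show "algebraic x \<Longrightarrow> v (- x) = v x" using v_mult[of "-1" x] by simp
qed

lemma v_reverse_triangle:
  assumes "algebraic x" "algebraic y"
  shows "\<bar>v x - v y\<bar> \<le> v (x + y)"
  using v_triangle[of "x + y" "- y"] v_triangle[of "x + y" "- x"] assms by (simp add: v_minus)

lemma v_sum: "(\<And>i. i \<in> I \<Longrightarrow> algebraic (f i)) \<Longrightarrow> v (sum f I) \<le> (\<Sum>i\<in>I. v (f i))"
proof (induction I rule: infinite_finite_induct)
  case (insert i I)
  then have "v (sum f (insert i I)) \<le> v (f i) + v (sum f I)"
    by (simp add: v_triangle algebraic_sum)
  then show ?case using insert by simp
qed simp_all

lemma poly_bounded_near_zero: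
  assumes "qbar_poly p"
  obtains K where "0 \<le> K" "\<And>x. algebraic x \<Longrightarrow> v x \<le> 1 \<Longrightarrow> v (poly p x) \<le> K"
  using assms
proof (induction p arbitrary: thesis rule: pCons_induct)
  case 0
  then show ?case by force
next
  case (pCons a p)
  then obtain K where K: "0 \<le> K" "\<And>x. algebraic x \<Longrightarrow> v x \<le> 1 \<Longrightarrow> v (poly p x) \<le> K"
    by auto
  have "v (poly (pCons a p) x) \<le> v a + K" if x: "algebraic x" "v x \<le> 1" for x
  proof -
    have "v (poly (pCons a p) x) \<le> v a + v x * v (poly p x)"
      using v_triangle[of a "x * poly p x"] pCons.prems x by (simp add: v_mult)
    also have "\<dots> \<le> v a + 1 * K"
      using x K pCons.prems by (intro add_left_mono mult_mono) (auto simp: v_nonneg)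
    finally show ?thesis by simp
  qed
  then show ?case using pCons.prems K(1) by (intro pCons.prems(1)[of "v a + K"]) (auto simp: v_nonneg)
qed

lemma poly_lower_bound_near_zero:
  assumes "qbar_poly p"
  obtains K where "0 \<le> K" "\<And>x. algebraic x \<Longrightarrow> v x \<le> 1 \<Longrightarrow> v (poly p 0) - K * v x \<le> v (poly p x)"
proof -
  obtain a q where p: "p = pCons a q" by (cases p)
  then have a: "algebraic a" and q: "qbar_poly q" using assms by auto
  obtain K where K: "0 \<le> K" "\<And>x. algebraic x \<Longrightarrow> v x \<le> 1 \<Longrightarrow> v (poly q x) \<le> K"
    using poly_bounded_near_zero[OF q] by blast
  have "v (poly p 0) - K * v x \<le> v (poly p x)" if x: "algebraic x" "v x \<le> 1" for x
  proof -
    have "v a - K * v x \<le> v a - v x * v (poly q x)"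
      using mult_left_mono[OF K(2)[OF x] v_nonneg[OF x(1)]] by (simp add: mult.commute)
    also have "\<dots> \<le> v (poly p x)"
      using v_reverse_triangle[of a "x * poly q x"] a x q by (simp add: p v_mult)
    finally show ?thesis by (simp add: p)
  qed
  with K(1) show ?thesis by (rule that)
qed

lemma v_lower_terms_le:
  assumes "1 \<le> v x" "algebraic x" "\<And>i. algebraic (c i)"
  shows "v x * v (\<Sum>i<n. c i * x ^ i) \<le> (\<Sum>i<n. v (c i)) * v x ^ n"
proof -
  have "v x * v (\<Sum>i<n. c i * x ^ i) \<le> v x * (\<Sum>i<n. v (c i) * v x ^ i)"
    using v_sum[of "{..<n}" "\<lambda>i. c i * x ^ i"] assms by (intro mult_left_mono) (auto simp: v_mult v_power)
  also have "\<dots> = (\<Sum>i<n. v (c i) * v x ^ Suc i)" by (simp add: sum_distrib_left algebra_simps)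
  also have "\<dots> \<le> (\<Sum>i<n. v (c i) * v x ^ n)"
    using assms by (intro sum_mono mult_left_mono power_increasing) (auto simp: v_nonneg)
  finally show ?thesis by (simp add: sum_distrib_right)
qed

lemma poly_comparable_to_leading_term:
  assumes "qbar_poly p" "p \<noteq> 0"
  obtains c C R where "0 < c" "0 < C" "1 \<le> R"
    "\<And>x. algebraic x \<Longrightarrow> R \<le> v x \<Longrightarrow> c * v x ^ degree p \<le> v (poly p x) \<and> v (poly p x) \<le> C * v x ^ degree p"
proof -
  define n where "n = degree p"
  define l where "l = v (lead_coeff p)"
  define S where "S = (\<Sum>i<n. v (coeff p i))"
  have coeffs: "algebraic (coeff p i)" for i using assms(1) unfolding qbar_poly_def by blast
  have l: "0 < l" using assms(2) coeffs by (simp add: l_def v_pos)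
  have S: "0 \<le> S" unfolding S_def using coeffs by (intro sum_nonneg v_nonneg)
  have "l / 2 * v x ^ n \<le> v (poly p x) \<and> v (poly p x) \<le> (S + l) * v x ^ n"
    if x: "algebraic x" "max 1 (2 * S / l) \<le> v x" for x
  proof -
    define low where "low = (\<Sum>i<n. coeff p i * x ^ i)"
    have split: "poly p x = low + lead_coeff p * x ^ n"
      by (simp add: poly_altdef low_def n_def lessThan_Suc_atMost[symmetric])
    have low_alg: "algebraic low" using coeffs x by (auto simp: low_def intro!: algebraic_sum)
    have lead: "v (lead_coeff p * x ^ n) = l * v x ^ n" using coeffs x by (simp add: v_mult v_power l_def)
    have t1: "1 \<le> v x" using x(2) by simp
    have low_le: "v x * v low \<le> S * v x ^ n"
      using v_lower_terms_le[OF t1 x(1) coeffs] by (simp add: low_def S_def)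
    have "v low \<le> v x * v low" using t1 v_nonneg[OF low_alg] by (simp add: mult_le_cancel_right1)
    then have up: "v low \<le> S * v x ^ n" using low_le by linarith
    have "S \<le> l / 2 * v x" using x(2) l by (simp add: field_simps)
    then have "S * v x ^ n \<le> l / 2 * v x * v x ^ n" by (rule mult_right_mono) (use t1 in simp)
    then have "v x * v low \<le> v x * (l / 2 * v x ^ n)" using low_le by (simp add: mult_ac)
    then have down: "v low \<le> l / 2 * v x ^ n" using t1 by simp
    show ?thesis
      using v_triangle[OF low_alg, of "lead_coeff p * x ^ n"] v_reverse_triangle[OF low_alg, of "lead_coeff p * x ^ n"]
        coeffs x up down lead unfolding split by (auto simp: algebra_simps)
  qed
  then show ?thesis using l S by (intro that[of "l / 2" "S + l" "max 1 (2 * S / l)"]) (auto simp: n_def)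
qed

end

section \<open>One step of the recursion\<close>

lemma max_le_of_reverse_triangle:
  fixes X Y t P Q :: real
  assumes X: "0 \<le> X" and Y: "0 \<le> Y" and t: "0 < t" and P: "\<bar>X - t * Y\<bar> \<le> P" and Q: "min X Y \<le> Q"
  shows "max X Y \<le> 2 * max t (1 / t) * max P Q"
proof -
  define s where "s = max t (1 / t)"
  define m where "m = max P Q"
  have ts: "t \<le> s" and st: "1 \<le> s * t" using t by (auto simp: s_def field_simps max_def)
  have s1: "1 \<le> s" using t by (metis le_max_iff_disj le_divide_eq_1_pos linorder_le_cases s_def)
  have m: "P \<le> m" "Q \<le> m" "0 \<le> m" using P by (auto simp: m_def le_max_iff_disj)
  have s_mono: "s * u \<le> s * w" if "u \<le> w" for u w using that s1 by simp
  have Y_le: "Y \<le> s * (t * Y)" using mult_right_mono[OF st Y] by (simp add: mult_ac)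
  have m_le: "m \<le> s * m" using mult_right_mono[OF s1 m(3)] by simp
  then have sm: "0 \<le> s * m" using m(3) by linarith
  consider "t * Y \<le> X / 2" | "X \<le> t * Y / 2" | "X / 2 < t * Y" "t * Y < 2 * X" by linarith
  then have "max X Y \<le> 2 * s * m"
  proof cases
    case 1
    then have "X / 2 \<le> P" and "t * Y \<le> P" using P by auto
    then have "Y \<le> s * m" using Y_le s_mono[of "t * Y" m] m by linarith
    then show ?thesis using \<open>X / 2 \<le> P\<close> m m_le sm by auto
  next
    case 2
    then have "t * Y \<le> 2 * m" and "X \<le> m" using P m by auto
    then have "Y \<le> 2 * s * m" using Y_le s_mono[of "t * Y" "2 * m"] by linarith
    then show ?thesis using \<open>X \<le> m\<close> m_le sm by auto
  next
    case 3
    show ?thesis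
    proof (cases "X \<le> Y")
      case True
      then have "X \<le> m" using Q m by auto
      then have "Y \<le> 2 * s * m" using Y_le s_mono[of "t * Y" "2 * m"] 3 by linarith
      then show ?thesis using \<open>X \<le> m\<close> m_le sm by auto
    next
      case False
      then have "Y \<le> m" using Q m by auto
      have "X \<le> 2 * (t * Y)" using 3 by simp
      also have "\<dots> \<le> 2 * s * m" using mult_mono[OF ts \<open>Y \<le> m\<close>] s1 Y by simp
      finally show ?thesis using \<open>Y \<le> m\<close> m_le sm by auto
    qed
  qed
  then show ?thesis by (simp add: s_def m_def)
qed

lemma one_plus_le_two_max_inverse: "0 < t \<Longrightarrow> 1 + t \<le> 2 * max t (1 / t)" for t :: real
proof (cases "t \<le> 1")
  case True
  assume "0 < t"
  then have "1 \<le> 1 / t" using True by simp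
  then show ?thesis using True max.cobounded2[of "1 / t" t] by linarith
next
  case False
  then show ?thesis using max.cobounded1[of t "1 / t"] by linarith
qed

lemma max_power: "0 \<le> x \<Longrightarrow> 0 \<le> y \<Longrightarrow> max x y ^ n = max (x ^ n) (y ^ n)" for x y :: real
  by (cases "x \<le> y") (auto simp: max_def power_mono intro: antisym)

lemma min_power: "0 \<le> x \<Longrightarrow> 0 \<le> y \<Longrightarrow> min x y ^ n = min (x ^ n) (y ^ n)" for x y :: real
  by (cases "x \<le> y") (auto simp: min_def power_mono intro: antisym)

context abs_value
begin

lemma step_max_upper:
  assumes "algebraic a" "algebraic b" "algebraic lam" "1 \<le> d"
  shows "max (v (a ^ d + lam * b ^ d)) (v (a * b ^ (d - 1))) \<le> (1 + v lam) * max (v a) (v b) ^ d"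
proof -
  define M where "M = max (v a) (v b)"
  have a: "0 \<le> v a" "v a \<le> M" and b: "0 \<le> v b" "v b \<le> M" and lam: "0 \<le> v lam"
    using assms by (auto simp: M_def v_nonneg)
  have "v (a ^ d + lam * b ^ d) \<le> v a ^ d + v lam * v b ^ d"
    using v_triangle[of "a ^ d" "lam * b ^ d"] assms by (simp add: v_mult v_power)
  also have "\<dots> \<le> (1 + v lam) * M ^ d"
    using a b lam by (simp add: distrib_right add_mono mult_left_mono power_mono)
  finally have first: "v (a ^ d + lam * b ^ d) \<le> (1 + v lam) * M ^ d" .
  have "v (a * b ^ (d - 1)) \<le> M * M ^ (d - 1)"
    using a b assms by (simp add: v_mult v_power mult_mono power_mono)
  also have "\<dots> = M ^ d" using assms(4) by (simp flip: power_Suc)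
  also have "\<dots> \<le> (1 + v lam) * M ^ d" using a lam by (simp add: distrib_right)
  finally show ?thesis using first by (simp add: M_def)
qed

lemma step_max_lower:
  assumes "algebraic a" "algebraic b" "algebraic lam" "lam \<noteq> 0" "1 \<le> d"
  shows "max (v a) (v b) ^ d \<le> 2 * max (v lam) (1 / v lam) * max (v (a ^ d + lam * b ^ d)) (v (a * b ^ (d - 1)))"
proof -
  have a: "0 \<le> v a" and b: "0 \<le> v b" using assms by (auto simp: v_nonneg)
  have "\<bar>v a ^ d - v lam * v b ^ d\<bar> \<le> v (a ^ d + lam * b ^ d)"
    using v_reverse_triangle[of "a ^ d" "lam * b ^ d"] assms by (simp add: v_mult v_power)
  moreover have "min (v a ^ d) (v b ^ d) \<le> v (a * b ^ (d - 1))"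
  proof -
    have "min (v a ^ d) (v b ^ d) = min (v a) (v b) ^ Suc (d - 1)"
      using assms(5) a b by (simp add: min_power)
    also have "\<dots> = min (v a) (v b) * min (v a) (v b) ^ (d - 1)" by simp
    also have "\<dots> \<le> v a * v b ^ (d - 1)" using a b by (intro mult_mono power_mono) auto
    finally show ?thesis using assms by (simp add: v_mult v_power)
  qed
  ultimately have "max (v a ^ d) (v b ^ d) \<le> 2 * max (v lam) (1 / v lam) * max (v (a ^ d + lam * b ^ d)) (v (a * b ^ (d - 1)))"
    using a b v_pos assms by (intro max_le_of_reverse_triangle) auto
  then show ?thesis using a b by (simp add: max_power)
qed

lemma step_dominant_first:
  assumes "algebraic a" "algebraic b" "algebraic lam" "v lam * v b ^ d \<le> v a ^ d / 2"
  shows "v a ^ d / 2 \<le> v (a ^ d + lam * b ^ d)" and "v (a ^ d + lam * b ^ d) \<le> 3 / 2 * v a ^ d"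
  using v_reverse_triangle[of "a ^ d" "lam * b ^ d"] v_triangle[of "a ^ d" "lam * b ^ d"] assms
  by (simp_all add: v_mult v_power)

end

lemma ln_le_of_power_comparable:
  fixes M M' Z :: real
  assumes M: "0 < M" "0 < M'" and Z: "M ^ d \<le> Z * M'" "M' \<le> Z * M ^ d"
  shows "\<bar>ln M' - real d * ln M\<bar> \<le> ln Z"
proof -
  have "0 < Z * M'" using M Z(1) by (meson less_le_trans zero_less_power)
  then have Z0: "0 < Z" using M by (simp add: zero_less_mult_iff)
  have "ln M' \<le> ln (Z * M ^ d)" using M Z Z0 by simp
  also have "\<dots> = ln Z + real d * ln M" using M Z0 by (simp add: ln_mult ln_realpow)
  finally have "ln M' \<le> ln Z + real d * ln M" .
  moreover have "real d * ln M = ln (M ^ d)" using M by (simp add: ln_realpow)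
  moreover have "ln (M ^ d) \<le> ln (Z * M')" using M Z Z0 by simp
  moreover have "ln (Z * M') = ln Z + ln M'" using M Z0 by (simp add: ln_mult)
  ultimately show ?thesis by linarith
qed

lemma exp_growth_step:
  assumes "1 \<le> d" "2 \<le> x"
  shows "2 * exp x ^ (d - 1) \<le> exp (x * (real d - 1 / 2))"
proof -
  have "ln 2 + real (d - 1) * x \<le> x * (real d - 1 / 2)"
    using assms ln_2_less_1 by (simp add: of_nat_diff algebra_simps)
  then have "exp (ln 2 + real (d - 1) * x) \<le> exp (x * (real d - 1 / 2))" by simp
  then show ?thesis by (simp add: exp_add exp_of_nat_mult)
qed

lemma weighted_power_le:
  fixes t Q X Y :: real
  assumes "1 \<le> t" "0 \<le> Q" "Q \<le> 1" "0 \<le> X" "0 \<le> Y" "t * X \<le> Q * Y" "1 \<le> m"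
  shows "t * X ^ m \<le> Q * Y ^ m"
proof -
  have "t * X ^ m \<le> t ^ m * X ^ m"
    using assms by (intro mult_right_mono) (auto simp: power_increasing[of 1 m t, simplified])
  also have "\<dots> = (t * X) ^ m" by (simp add: power_mult_distrib)
  also have "\<dots> \<le> (Q * Y) ^ m" using assms by (intro power_mono) auto
  also have "\<dots> = Q ^ m * Y ^ m" by (simp add: power_mult_distrib)
  also have "\<dots> \<le> Q * Y ^ m"
    using assms by (intro mult_right_mono) (auto simp: power_decreasing[of 1 m Q, simplified])
  finally show ?thesis .
qed

section \<open>Orbits\<close>

text \<open>In the application, a n and b n are A_{c,n+1} and B_{c,n+1} evaluated at lam: the
  index is shifted by one so that the recursion holds from 0 on.\<close>

locale orbit = abs_value +
  fixes d :: nat and lam :: complex and a b :: "nat \<Rightarrow> complex"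
  assumes d: "2 \<le> d" and lam: "algebraic lam" "lam \<noteq> 0"
    and alg: "algebraic (a n)" "algebraic (b n)"
    and a_Suc: "a (Suc n) = a n ^ d + lam * b n ^ d"
    and b_Suc: "b (Suc n) = a n * b n ^ (d - 1)"
    and nontrivial: "a 0 \<noteq> 0 \<or> b 0 \<noteq> 0"
begin

definition M :: "nat \<Rightarrow> real" where
  "M n = max (v (a n)) (v (b n))"

definition power_comparable :: "real \<Rightarrow> nat \<Rightarrow> bool" where
  "power_comparable Z n \<longleftrightarrow> M n ^ d \<le> Z * M (Suc n) \<and> M (Suc n) \<le> Z * M n ^ d"

lemma v_a_nonneg: "0 \<le> v (a n)" and v_b_nonneg: "0 \<le> v (b n)" and v_lam_pos: "0 < v lam"
  using alg lam by (simp_all add: v_nonneg v_pos)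

lemma M_nonneg: "0 \<le> M n"
  using v_a_nonneg by (simp add: M_def le_max_iff_disj)

lemma v_b_Suc: "v (b (Suc n)) = v (a n) * v (b n) ^ (d - 1)"
  using alg by (simp add: b_Suc v_mult v_power)

lemma power_comparable_generic: "power_comparable (2 * max (v lam) (1 / v lam)) n"
proof -
  have "M (Suc n) \<le> (1 + v lam) * M n ^ d"
    using step_max_upper[OF alg lam(1)] d by (simp add: M_def a_Suc b_Suc)
  also have "\<dots> \<le> 2 * max (v lam) (1 / v lam) * M n ^ d"
    using v_lam_pos M_nonneg by (intro mult_right_mono one_plus_le_two_max_inverse) auto
  finally show ?thesis
    using step_max_lower[OF alg lam] d by (simp add: power_comparable_def M_def a_Suc b_Suc)
qed

lemma M_pos: "0 < M n"
proof (induction n)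
  case 0
  then show ?case using nontrivial alg by (auto simp: M_def less_max_iff_disj v_pos)
next
  case (Suc n)
  have "0 < M n ^ d" using Suc by simp
  also have "\<dots> \<le> 2 * max (v lam) (1 / v lam) * M (Suc n)"
    using power_comparable_generic by (simp add: power_comparable_def)
  finally show ?case using v_lam_pos by (simp add: zero_less_mult_iff)
qed

lemma log_defect_le:
  "power_comparable Z n \<Longrightarrow> \<bar>ln (M (Suc n)) - real d * ln (M n)\<bar> \<le> ln Z"
  using M_pos by (intro ln_le_of_power_comparable) (auto simp: power_comparable_def)

lemma power_comparable_mono: "power_comparable Z n \<Longrightarrow> Z \<le> Z' \<Longrightarrow> power_comparable Z' n"
  unfolding power_comparable_def
  by (meson M_nonneg mult_right_mono order_trans zero_le_power)

lemma power_comparable_dominant: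
  assumes good: "v lam * v (b n) ^ d \<le> v (a n) ^ d / 2" and E: "v (b n) \<le> E * v (a n)" "1 \<le> E"
  shows "power_comparable (2 * E ^ d) n"
proof -
  note a_Suc_bounds = step_dominant_first[OF alg lam(1) good, folded a_Suc]
  have "M n \<le> E * v (a n)" using E v_a_nonneg[of n] by (simp add: M_def mult_le_cancel_right1)
  then have "M n ^ d \<le> E ^ d * v (a n) ^ d" using M_nonneg by (simp add: power_mono flip: power_mult_distrib)
  also have "\<dots> \<le> E ^ d * (2 * v (a (Suc n)))"
    using a_Suc_bounds(1) E by (intro mult_left_mono) auto
  also have "\<dots> \<le> 2 * E ^ d * M (Suc n)"
    using E by (simp add: M_def)
  finally have lower: "M n ^ d \<le> 2 * E ^ d * M (Suc n)" .
  have "v (b (Suc n)) \<le> M n * M n ^ (d - 1)"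
    unfolding v_b_Suc M_def using v_a_nonneg v_b_nonneg by (intro mult_mono power_mono) (auto simp: le_max_iff_disj)
  also have "\<dots> = M n ^ d" using d by (simp flip: power_Suc)
  finally have b_Suc_le: "v (b (Suc n)) \<le> M n ^ d" .
  have "v (a n) ^ d \<le> M n ^ d" using v_a_nonneg by (simp add: M_def power_mono)
  then have "v (a (Suc n)) \<le> 3 / 2 * M n ^ d" using a_Suc_bounds(2) by linarith
  then have "M (Suc n) \<le> 3 / 2 * M n ^ d"
    using b_Suc_le zero_le_power[OF M_nonneg, of n d] unfolding M_def[of "Suc n"] by simp
  also have "\<dots> \<le> 2 * E ^ d * M n ^ d"
    using one_le_power[OF E(2), of d] M_nonneg by (intro mult_right_mono) auto
  finally show ?thesis using lower by (simp add: power_comparable_def)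
qed

text \<open>The bound survives a step because exp (W \<rho>^{k+1}) \<ge> 2 exp (W \<rho>^k)^{d-1} for
  \<rho> = d - 1/2 (lemma exp_growth_step).\<close>

lemma small_parameter_invariant:
  assumes W: "2 \<le> W" and base: "v (b 0) \<le> exp W * v (a 0)"
  shows "v lam * exp (W * (real d - 1 / 2) ^ k) ^ d \<le> 1 / 2 \<Longrightarrow> v (b k) \<le> exp (W * (real d - 1 / 2) ^ k) * v (a k)"
proof (induction k)
  case 0
  then show ?case using base by simp
next
  case (Suc k)
  define E where "E j = exp (W * (real d - 1 / 2) ^ j)" for j
  have growth: "2 \<le> W * (real d - 1 / 2) ^ j" for j
    using W d mult_mono[of 2 W 1 "(real d - 1 / 2) ^ j"] by (simp add: one_le_power)
  have E1: "1 \<le> E j" for j using growth[of j] by (simp add: E_def)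
  have E_Suc: "2 * E k ^ (d - 1) \<le> E (Suc k)"
    using exp_growth_step[of d "W * (real d - 1 / 2) ^ k"] d growth[of k] by (simp add: E_def mult_ac)
  have "(real d - 1 / 2) ^ k \<le> (real d - 1 / 2) ^ Suc k" using d by (intro power_increasing) auto
  then have "E k \<le> E (Suc k)" using W by (simp add: E_def)
  then have "v lam * E k ^ d \<le> v lam * E (Suc k) ^ d"
    using v_lam_pos E1[of k] by (intro mult_left_mono power_mono) auto
  then have small: "v lam * E k ^ d \<le> 1 / 2" using Suc.prems by (simp add: E_def)
  then have IH: "v (b k) \<le> E k * v (a k)" using Suc.IH by (simp add: E_def)
  have "v lam * v (b k) ^ d \<le> v lam * (E k * v (a k)) ^ d"
    using IH v_b_nonneg v_lam_pos by (intro mult_left_mono power_mono) auto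
  also have "\<dots> = (v lam * E k ^ d) * v (a k) ^ d" by (simp add: power_mult_distrib)
  also have "\<dots> \<le> v (a k) ^ d / 2" using mult_right_mono[OF small zero_le_power[OF v_a_nonneg]] by simp
  finally have a_Suc_ge: "v (a k) ^ d / 2 \<le> v (a (Suc k))"
    using step_dominant_first(1)[OF alg lam(1)] by (simp add: a_Suc)
  have "v (b (Suc k)) \<le> v (a k) * (E k * v (a k)) ^ (d - 1)"
    using IH v_a_nonneg v_b_nonneg by (simp add: v_b_Suc mult_left_mono power_mono)
  also have "\<dots> = E k ^ (d - 1) * v (a k) ^ d"
    using d by (simp add: power_mult_distrib mult_ac flip: power_Suc)
  also have "\<dots> \<le> (2 * E k ^ (d - 1)) * v (a (Suc k))"
    using a_Suc_ge E1[of k] by (simp add: mult_left_mono)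
  also have "\<dots> \<le> E (Suc k) * v (a (Suc k))"
    using E_Suc v_a_nonneg by (simp add: mult_right_mono)
  finally show ?case by (simp add: E_def)
qed

lemma power_comparable_small_parameter:
  assumes small: "v lam \<le> 1" and W: "2 \<le> W" and base: "v (b 0) \<le> exp W * v (a 0)"
  shows "power_comparable (4 * exp (W * (real d - 1 / 2) ^ n) ^ d) n"
proof -
  define E where "E = exp (W * (real d - 1 / 2) ^ n)"
  have E1: "1 \<le> E"
    using W d mult_mono[of 2 W 1 "(real d - 1 / 2) ^ n"] by (simp add: E_def one_le_power)
  show ?thesis
  proof (cases "v lam * E ^ d \<le> 1 / 2")
    case True
    have IH: "v (b n) \<le> E * v (a n)"
      using small_parameter_invariant[OF W base True[unfolded E_def]] by (simp add: E_def)
    have "v lam * v (b n) ^ d \<le> v lam * (E * v (a n)) ^ d"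
      using IH v_b_nonneg v_lam_pos by (intro mult_left_mono power_mono) auto
    also have "\<dots> = (v lam * E ^ d) * v (a n) ^ d" by (simp add: power_mult_distrib)
    also have "\<dots> \<le> v (a n) ^ d / 2" using mult_right_mono[OF True zero_le_power[OF v_a_nonneg]] by simp
    finally have "power_comparable (2 * E ^ d) n"
      using power_comparable_dominant IH E1 by blast
    then show ?thesis by (rule power_comparable_mono) (simp add: E_def)
  next
    case False
    have "v lam \<le> 1 / v lam"
      using small v_lam_pos mult_le_one[of "v lam" "v lam"] by (simp add: field_simps)
    then have "max (v lam) (1 / v lam) = 1 / v lam" by simp
    moreover have "2 / v lam \<le> 4 * E ^ d" using False v_lam_pos by (simp add: field_simps)
    ultimately show ?thesis
      using power_comparable_generic[of n] by (auto simp: E_def intro: power_comparable_mono)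
  qed
qed

text \<open>Each step costs a factor 2^d, coming from |a (k+1)| \<ge> |a k|^d / 2.\<close>

lemma large_parameter_invariant:
  assumes large: "1 \<le> v lam" and K: "0 \<le> K" and base: "v lam ^ 2 * v (b 0) ^ d \<le> K * v (a 0) ^ d"
  shows "2 ^ (d * k) * K \<le> v lam / 2 \<Longrightarrow> v lam * v (b k) ^ d \<le> 2 ^ (d * k) * K / v lam * v (a k) ^ d"
proof (induction k)
  case 0
  then show ?case using base v_lam_pos by (simp add: field_simps power2_eq_square)
next
  case (Suc k)
  define Q where "Q j = 2 ^ (d * j) * K / v lam" for j
  have "(2::real) ^ (d * k) \<le> 2 ^ (d * Suc k)" by (intro power_increasing) auto
  then have "2 ^ (d * k) * K \<le> v lam / 2"
    using Suc.prems K by (meson mult_right_mono order_trans)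
  then have IH: "v lam * v (b k) ^ d \<le> Q k * v (a k) ^ d" and Q_le: "Q k \<le> 1 / 2"
    using Suc.IH v_lam_pos by (simp_all add: Q_def field_simps)
  have Q0: "0 \<le> Q k" using K v_lam_pos by (simp add: Q_def)
  have "Q k * v (a k) ^ d \<le> 1 / 2 * v (a k) ^ d"
    using Q_le v_a_nonneg[of k] by (intro mult_right_mono) auto
  then have "v lam * v (b k) ^ d \<le> v (a k) ^ d / 2" using IH by linarith
  then have a_Suc_ge: "v (a k) ^ d / 2 \<le> v (a (Suc k))"
    using step_dominant_first(1)[OF alg lam(1)] by (simp add: a_Suc)
  have "v lam * (v (b k) ^ d) ^ (d - 1) \<le> Q k * (v (a k) ^ d) ^ (d - 1)"
    using IH Q_le Q0 large d v_a_nonneg v_b_nonneg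
    by (intro weighted_power_le[of "v lam" "Q k" "v (b k) ^ d" "v (a k) ^ d" "d - 1"]) auto
  then have "v (a k) ^ d * (v lam * (v (b k) ^ d) ^ (d - 1)) \<le> v (a k) ^ d * (Q k * (v (a k) ^ d) ^ (d - 1))"
    using v_a_nonneg by (simp add: mult_left_mono)
  moreover have "v (b (Suc k)) ^ d = v (a k) ^ d * (v (b k) ^ d) ^ (d - 1)"
    by (simp add: v_b_Suc power_mult_distrib mult.commute flip: power_mult)
  ultimately have "v lam * v (b (Suc k)) ^ d \<le> v (a k) ^ d * (Q k * (v (a k) ^ d) ^ (d - 1))"
    by (simp add: mult.left_commute)
  also have "\<dots> = Q k * 2 ^ d * (v (a k) ^ d / 2) ^ d"
    using d by (simp add: power_divide mult_ac flip: power_Suc)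
  also have "\<dots> \<le> Q k * 2 ^ d * v (a (Suc k)) ^ d"
    using a_Suc_ge Q0 v_a_nonneg[of k] by (intro mult_left_mono power_mono) auto
  also have "Q k * 2 ^ d = Q (Suc k)" by (simp add: Q_def power_add)
  finally show ?case by (simp add: Q_def)
qed

lemma power_comparable_large_parameter:
  assumes large: "1 \<le> v lam" and K: "1 \<le> K" and base: "v lam ^ 2 * v (b 0) ^ d \<le> K * v (a 0) ^ d"
  shows "power_comparable (4 * K * 2 ^ (d * n)) n"
proof (cases "2 ^ (d * n) * K \<le> v lam / 2")
  case True
  have "v lam * v (b n) ^ d \<le> 2 ^ (d * n) * K / v lam * v (a n) ^ d"
    using large_parameter_invariant[OF large _ base True] K by simp
  also have "\<dots> \<le> 1 / 2 * v (a n) ^ d"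
    using True v_lam_pos v_a_nonneg[of n] by (intro mult_right_mono) (simp_all add: pos_divide_le_eq)
  finally have good: "v lam * v (b n) ^ d \<le> v (a n) ^ d / 2" by simp
  have "v (b n) ^ d \<le> v lam * v (b n) ^ d"
    using large v_b_nonneg[of n] mult_right_mono[of 1 "v lam" "v (b n) ^ d"] by simp
  then have "v (b n) ^ d \<le> v (a n) ^ d" using good zero_le_power[OF v_a_nonneg[of n], of d] by linarith
  then have "v (b n) \<le> 1 * v (a n)" using d v_a_nonneg[of n] v_b_nonneg[of n] by (simp add: power_mono_iff)
  from power_comparable_dominant[OF good this] have "power_comparable 2 n" by simp
  moreover have "2 \<le> 4 * K * 2 ^ (d * n)"
    using K one_le_power[of "2::real" "d * n"] mult_mono[OF K, of 1 "2 ^ (d * n)"] by simp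
  ultimately show ?thesis by (rule power_comparable_mono)
next
  case False
  have "1 / v lam \<le> 1" using large by simp
  then have "max (v lam) (1 / v lam) = v lam" using large by (intro max_absorb1) linarith
  moreover have "2 * v lam \<le> 4 * K * 2 ^ (d * n)" using False by (simp add: mult_ac)
  ultimately show ?thesis
    using power_comparable_generic[of n] by (auto intro: power_comparable_mono)
qed

end

section \<open>The polynomials A_{c,n} and B_{c,n}\<close>

lemma qbar_poly_add [simp]: "qbar_poly p \<Longrightarrow> qbar_poly q \<Longrightarrow> qbar_poly (p + q)"
  by (simp add: qbar_poly_def)

lemma qbar_poly_mult [simp]: "qbar_poly p \<Longrightarrow> qbar_poly q \<Longrightarrow> qbar_poly (p * q)"
  unfolding qbar_poly_def coeff_mult by (auto intro!: algebraic_sum)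

lemma qbar_poly_0 [simp]: "qbar_poly 0"
  by (simp add: qbar_poly_def)

lemma qbar_poly_1 [simp]: "qbar_poly 1"
  by (simp add: qbar_poly_def coeff_1)

lemma qbar_poly_power [simp]: "qbar_poly p \<Longrightarrow> qbar_poly (p ^ n)"
  by (induction n) simp_all

lemma Acn_Bcn_Suc_Suc:
  "Acn d A B (Suc (Suc n)) = Acn d A B (Suc n) ^ d + [:0, 1:] * Bcn d A B (Suc n) ^ d"
  "Bcn d A B (Suc (Suc n)) = Acn d A B (Suc n) * Bcn d A B (Suc n) ^ (d - 1)"
  by (simp_all add: Acn_def Bcn_def case_prod_unfold Let_def)

lemma Acn_Bcn_1_if_nonzero_at_0:
  assumes "poly A 0 \<noteq> 0"
  shows "Acn d A B 1 = A ^ d + [:0, 1:] * B ^ d" "Bcn d A B 1 = A * B ^ (d - 1)"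
  using assms ABc.simps(2)[of d A B] by (simp_all add: Acn_def Bcn_def)

lemma Acn_Bcn_1_if_zero_at_0:
  assumes "A = pCons 0 A'" "1 \<le> d"
  shows "Acn d A B 1 = B ^ d + [:0, 1:] ^ (d - 1) * A' ^ d" "Bcn d A B 1 = A' * B ^ (d - 1)"
proof -
  have X: "[:0, 1:] \<noteq> (0 :: complex poly)" by simp
  have A: "A = [:0, 1:] * A'" using assms(1) by simp
  obtain k where d: "d = Suc k" using assms(2) by (cases d) auto
  have "A ^ d = [:0, 1:] * ([:0, 1:] ^ (d - 1) * A' ^ d)"
    by (simp only: A d power_mult_distrib power_Suc diff_Suc_1 mult_ac)
  then have "A ^ d + [:0, 1:] * B ^ d = [:0, 1:] * (B ^ d + [:0, 1:] ^ (d - 1) * A' ^ d)"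
    by (simp add: algebra_simps)
  moreover have "A * B ^ (d - 1) = [:0, 1:] * (A' * B ^ (d - 1))" by (simp add: A mult.assoc)
  moreover have "ABc d A B 1 = ((A ^ d + [:0, 1:] * B ^ d) div [:0, 1:], (A * B ^ (d - 1)) div [:0, 1:])"
    using ABc.simps(2)[of d A B] assms(1) by simp
  ultimately show "Acn d A B 1 = B ^ d + [:0, 1:] ^ (d - 1) * A' ^ d" "Bcn d A B 1 = A' * B ^ (d - 1)"
    by (simp_all only: Acn_def Bcn_def nonzero_mult_div_cancel_left[OF X] fst_conv snd_conv)
qed

text \<open>s = lam exactly when A(0) = 0, the case in which the definition divides by t.\<close>

lemma level_one_scaling:
  assumes "1 \<le> d"
  obtains s where "s = 1 \<or> s = lam"
    "s * poly (Acn d A B 1) lam = poly A lam ^ d + lam * poly B lam ^ d"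
    "s * poly (Bcn d A B 1) lam = poly A lam * poly B lam ^ (d - 1)"
proof (cases "poly A 0 = 0")
  case True
  then obtain A' where A': "A = pCons 0 A'" by (cases A) auto
  note level_one = Acn_Bcn_1_if_zero_at_0[OF A' assms]
  have "lam * poly (Acn d A B 1) lam = poly A lam ^ d + lam * poly B lam ^ d"
    unfolding level_one using assms
    by (simp add: A' poly_power power_mult_distrib algebra_simps flip: power_Suc)
  moreover have "lam * poly (Bcn d A B 1) lam = poly A lam * poly B lam ^ (d - 1)"
    unfolding level_one by (simp add: A')
  ultimately show ?thesis using that by blast
next
  case False
  then show ?thesis using that[of 1] unfolding Acn_Bcn_1_if_nonzero_at_0[OF False] by simp
qed

lemma qbar_poly_Acn_Bcn:
  assumes "qbar_poly A" "qbar_poly B" "1 \<le> d"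
  shows "qbar_poly (Acn d A B n) \<and> qbar_poly (Bcn d A B n)"
proof (induction n)
  case 0
  then show ?case using assms by (simp add: Acn_def Bcn_def)
next
  case (Suc n)
  show ?case
  proof (cases n)
    case 0
    have "qbar_poly (Acn d A B 1) \<and> qbar_poly (Bcn d A B 1)"
    proof (cases "poly A 0 = 0")
      case True
      then obtain A' where A': "A = pCons 0 A'" by (cases A) auto
      then show ?thesis using assms unfolding Acn_Bcn_1_if_zero_at_0[OF A' assms(3)] by simp
    next
      case False
      show ?thesis using assms unfolding Acn_Bcn_1_if_nonzero_at_0[OF False] by simp
    qed
    then show ?thesis using 0 by simp
  next
    case (Suc m)
    then show ?thesis using Suc.IH by (simp add: Acn_Bcn_Suc_Suc)
  qed
qed

lemma poly_Acn_1_at_0_nonzero: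
  assumes "coprime A B" "2 \<le> d"
  shows "poly (Acn d A B 1) 0 \<noteq> 0"
proof (cases "poly A 0 = 0")
  case True
  then obtain A' where A': "A = pCons 0 A'" by (cases A) auto
  have "poly B 0 \<noteq> 0"
  proof
    assume "poly B 0 = 0"
    then have "[:0, 1:] dvd A" "[:0, 1:] dvd B" using True by (simp_all add: dvd_iff_poly_eq_0)
    then show False using assms(1) coprime_common_divisor by (fastforce simp: is_unit_iff_degree)
  qed
  moreover have "1 \<le> d" using assms(2) by simp
  ultimately show ?thesis using assms(2) unfolding Acn_Bcn_1_if_zero_at_0[OF A' \<open>1 \<le> d\<close>] by (simp add: poly_power power_0_left)
next
  case False
  then show ?thesis unfolding Acn_Bcn_1_if_nonzero_at_0[OF False] by simp
qed

section \<open>Large parameters\<close>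

lemma exponent_gap:
  fixes d p q :: nat
  assumes "2 \<le> d"
  shows "2 + d * (p + q * (d - 1)) \<le> d * max (d * p) (d * q + 1)"
proof -
  obtain k where d: "d = k + 2" using assms by (metis add.commute le_Suc_ex)
  show ?thesis
  proof (cases "q < p")
    case True
    then obtain s where "p = q + s + 1" by (metis add.commute less_imp_Suc_add add_Suc_right Suc_eq_plus1)
    then show ?thesis unfolding d by (simp add: max_def algebra_simps)
  next
    case False
    then obtain s where "q = p + s" by (metis le_Suc_ex not_less)
    then show ?thesis unfolding d by (simp add: max_def algebra_simps)
  qed
qed

lemma monomial_power_bounds:
  fixes t \<alpha> c C :: real
  assumes "0 < t" "0 < c" "c * t ^ p \<le> \<alpha>" "\<alpha> \<le> C * t ^ p"
  shows "c ^ d * t ^ (d * p) \<le> \<alpha> ^ d" "\<alpha> ^ d \<le> C ^ d * t ^ (d * p)"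
proof -
  have "0 \<le> c * t ^ p" using assms by simp
  then show "c ^ d * t ^ (d * p) \<le> \<alpha> ^ d" "\<alpha> ^ d \<le> C ^ d * t ^ (d * p)"
    using power_mono[OF assms(3), of d] power_mono[OF assms(4), of d] assms(3)
    by (simp_all add: power_mult_distrib mult.commute[of d] power_mult)
qed

lemma reverse_triangle_monomial_lower:
  fixes t \<alpha> \<beta> cA CA cB CB :: real and p q d :: nat
  assumes t: "1 \<le> t" and d: "2 \<le> d" and c: "0 < cA" "0 < CA" "0 < cB" "0 < CB"
    and \<alpha>: "cA * t ^ p \<le> \<alpha>" "\<alpha> \<le> CA * t ^ p" and \<beta>: "cB * t ^ q \<le> \<beta>" "\<beta> \<le> CB * t ^ q"
    and tA: "2 * CB ^ d \<le> cA ^ d * t" and tB: "2 * CA ^ d \<le> cB ^ d * t"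
  shows "min (cA ^ d) (cB ^ d) / 2 * t ^ max (d * p) (d * q + 1) \<le> \<bar>\<alpha> ^ d - t * \<beta> ^ d\<bar>"
proof -
  have t0: "0 < t" using t by simp
  note \<alpha>_pow = monomial_power_bounds[OF t0 c(1) \<alpha>, of d]
  note \<beta>_pow = monomial_power_bounds[OF t0 c(3) \<beta>, of d]
  show ?thesis
  proof (cases "q < p")
    case True
    then have exps: "max (d * p) (d * q + 1) = d * p" "d * q + 2 \<le> d * p"
      using d mult_le_mono2[of "Suc q" p d] by auto
    have "t * \<beta> ^ d \<le> CB ^ d * t ^ (d * q + 1)"
      using \<beta>_pow(2) t0 by (simp add: mult_left_mono mult_ac)
    also have "\<dots> \<le> cA ^ d / 2 * t ^ (d * q + 2)"
      using tA t0 by (simp add: mult_right_mono mult_ac)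
    also have "\<dots> \<le> cA ^ d / 2 * t ^ (d * p)"
      using exps(2) t c by (intro mult_left_mono power_increasing) auto
    finally have "cA ^ d / 2 * t ^ (d * p) \<le> \<alpha> ^ d - t * \<beta> ^ d" using \<alpha>_pow(1) by linarith
    moreover have "min (cA ^ d) (cB ^ d) / 2 * t ^ (d * p) \<le> cA ^ d / 2 * t ^ (d * p)"
      using t0 by (intro mult_right_mono) auto
    ultimately show ?thesis unfolding exps(1) by linarith
  next
    case False
    then have le: "d * p \<le> d * q" by simp
    have exps: "max (d * p) (d * q + 1) = d * q + 1" using le by (intro max_absorb2) linarith
    have "t ^ (d * p) \<le> t ^ (d * q)" using le t by (intro power_increasing) auto
    then have "CA ^ d * t ^ (d * p) \<le> CA ^ d * t ^ (d * q)" using c by (intro mult_left_mono) auto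
    then have "\<alpha> ^ d \<le> CA ^ d * t ^ (d * q)" using \<alpha>_pow(2) by linarith
    also have "\<dots> \<le> cB ^ d / 2 * t ^ (d * q + 1)"
      using tB t0 by (simp add: mult_right_mono mult_ac)
    moreover have "cB ^ d * t ^ (d * q + 1) \<le> t * \<beta> ^ d"
      using mult_left_mono[OF \<beta>_pow(1), of t] t0 by (simp add: mult_ac)
    ultimately have "cB ^ d / 2 * t ^ (d * q + 1) \<le> t * \<beta> ^ d - \<alpha> ^ d" by linarith
    moreover have "min (cA ^ d) (cB ^ d) / 2 * t ^ (d * q + 1) \<le> cB ^ d / 2 * t ^ (d * q + 1)"
      using t0 by (intro mult_right_mono) auto
    ultimately show ?thesis unfolding exps by linarith
  qed
qed

lemma monomial_product_upper:
  fixes t \<alpha> \<beta> CA CB :: real and p q d :: nat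
  assumes t: "1 \<le> t" and d: "2 \<le> d" and \<alpha>: "0 \<le> \<alpha>" "\<alpha> \<le> CA * t ^ p" and \<beta>: "0 \<le> \<beta>" "\<beta> \<le> CB * t ^ q"
  shows "t ^ 2 * (\<alpha> * \<beta> ^ (d - 1)) ^ d \<le> (CA * CB ^ (d - 1)) ^ d * t ^ (d * max (d * p) (d * q + 1))"
proof -
  have "\<alpha> * \<beta> ^ (d - 1) \<le> CA * t ^ p * (CB * t ^ q) ^ (d - 1)"
    using \<alpha> \<beta> by (intro mult_mono power_mono) auto
  also have "\<dots> = CA * CB ^ (d - 1) * t ^ (p + q * (d - 1))"
    by (simp add: power_mult_distrib power_add power_mult)
  finally have prod_le: "\<alpha> * \<beta> ^ (d - 1) \<le> CA * CB ^ (d - 1) * t ^ (p + q * (d - 1))" .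
  then have "0 \<le> CA * CB ^ (d - 1) * t ^ (p + q * (d - 1))" using \<alpha> \<beta> by (meson order_trans zero_le_mult_iff zero_le_power)
  moreover have "0 < t ^ (p + q * (d - 1))" using t by simp
  ultimately have C: "0 \<le> CA * CB ^ (d - 1)" by (metis mult_neg_pos not_le)
  have "t ^ 2 * (\<alpha> * \<beta> ^ (d - 1)) ^ d \<le> t ^ 2 * (CA * CB ^ (d - 1) * t ^ (p + q * (d - 1))) ^ d"
    using prod_le \<alpha> \<beta> by (intro mult_left_mono power_mono) auto
  also have "\<dots> = (CA * CB ^ (d - 1)) ^ d * (t ^ 2 * t ^ (d * (p + q * (d - 1))))"
    by (simp add: power_mult_distrib mult.commute[of d] power_mult)
  also have "\<dots> = (CA * CB ^ (d - 1)) ^ d * t ^ (2 + d * (p + q * (d - 1)))"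
    by (simp only: power_add)
  also have "\<dots> \<le> (CA * CB ^ (d - 1)) ^ d * t ^ (d * max (d * p) (d * q + 1))"
    using exponent_gap[OF d] t C by (intro mult_left_mono power_increasing) auto
  finally show ?thesis .
qed

lemma monomial_comparison:
  fixes t \<alpha> \<beta> P cA CA cB CB :: real and p q d :: nat
  assumes t: "1 \<le> t" "2 * CB ^ d \<le> cA ^ d * t" "2 * CA ^ d \<le> cB ^ d * t" and d: "2 \<le> d"
    and c: "0 < cA" "0 < CA" "0 < cB" "0 < CB"
    and \<alpha>: "cA * t ^ p \<le> \<alpha>" "\<alpha> \<le> CA * t ^ p" and \<beta>: "cB * t ^ q \<le> \<beta>" "\<beta> \<le> CB * t ^ q"
    and P: "\<bar>\<alpha> ^ d - t * \<beta> ^ d\<bar> \<le> P"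
  shows "t ^ 2 * (\<alpha> * \<beta> ^ (d - 1)) ^ d \<le> (CA * CB ^ (d - 1)) ^ d / (min (cA ^ d) (cB ^ d) / 2) ^ d * P ^ d"
proof -
  define E where "E = max (d * p) (d * q + 1)"
  define m where "m = min (cA ^ d) (cB ^ d) / 2"
  have m: "0 < m" using c by (simp add: m_def)
  have "0 \<le> cA * t ^ p" "0 \<le> cB * t ^ q" using c t by simp_all
  then have "t ^ 2 * (\<alpha> * \<beta> ^ (d - 1)) ^ d \<le> (CA * CB ^ (d - 1)) ^ d * t ^ (d * E)"
    unfolding E_def using \<alpha> \<beta> by (intro monomial_product_upper t d) auto
  also have "\<dots> = (CA * CB ^ (d - 1)) ^ d / m ^ d * (m * t ^ E) ^ d"
    using m by (simp add: power_mult_distrib mult.commute[of d] power_mult)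
  also have "\<dots> \<le> (CA * CB ^ (d - 1)) ^ d / m ^ d * P ^ d"
    using reverse_triangle_monomial_lower[OF t(1) d c \<alpha> \<beta> t(2,3)] P m t c
    by (intro mult_left_mono power_mono) (auto simp: m_def E_def)
  finally show ?thesis by (simp add: m_def)
qed

context abs_value
begin

lemma orbit_of_parameter:
  assumes d: "2 \<le> d" and A: "qbar_poly A" "poly A lam \<noteq> 0" and B: "qbar_poly B" "poly B lam \<noteq> 0"
    and lam: "algebraic lam" "lam \<noteq> 0"
  shows "orbit v d lam (\<lambda>n. poly (Acn d A B (Suc n)) lam) (\<lambda>n. poly (Bcn d A B (Suc n)) lam)"
proof -
  from d have "1 \<le> d" by simp
  then obtain s where "s = 1 \<or> s = lam" "s * poly (Bcn d A B 1) lam = poly A lam * poly B lam ^ (d - 1)"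
    by (rule level_one_scaling)
  then have "poly (Bcn d A B 1) lam \<noteq> 0" using A B by auto
  moreover have "qbar_poly (Acn d A B n) \<and> qbar_poly (Bcn d A B n)" for n
    using qbar_poly_Acn_Bcn A B d by simp
  ultimately show ?thesis
    using abs_value d lam by unfold_locales (simp_all add: Acn_Bcn_Suc_Suc poly_power)
qed

lemma ratio_bounded_near_zero:
  assumes P: "qbar_poly P" "poly P 0 \<noteq> 0" and Q: "qbar_poly Q"
  obtains r W where "0 < r" "2 \<le> W" "\<And>x. algebraic x \<Longrightarrow> v x \<le> r \<Longrightarrow> v (poly Q x) \<le> exp W * v (poly P x)"
proof -
  obtain KP where KP: "0 \<le> KP" "\<And>x. algebraic x \<Longrightarrow> v x \<le> 1 \<Longrightarrow> v (poly P 0) - KP * v x \<le> v (poly P x)"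
    using poly_lower_bound_near_zero[OF P(1)] by blast
  obtain KQ where KQ: "0 \<le> KQ" "\<And>x. algebraic x \<Longrightarrow> v x \<le> 1 \<Longrightarrow> v (poly Q x) \<le> KQ"
    using poly_bounded_near_zero[OF Q] by blast
  define h where "h = v (poly P 0) / 2"
  have h: "0 < h" using P by (simp add: h_def v_pos)
  define r where "r = min 1 (h / (KP + 1))"
  define W where "W = max 2 (ln (max 1 (KQ / h)))"
  have "v (poly Q x) \<le> exp W * v (poly P x)" if x: "algebraic x" "v x \<le> r" for x
  proof -
    have x1: "v x \<le> 1" using x by (simp add: r_def)
    have "KP * v x \<le> KP * (h / (KP + 1))"
      using x KP(1) by (intro mult_left_mono) (auto simp: r_def)
    also have "\<dots> \<le> h" using KP(1) h by (simp add: field_simps)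
    finally have "h \<le> v (poly P x)" using KP(2)[OF x(1) x1] by (simp add: h_def)
    have "KQ = KQ / h * h" using h by simp
    also have "\<dots> \<le> max 1 (KQ / h) * h" using h by (intro mult_right_mono) auto
    also have "\<dots> = exp (ln (max 1 (KQ / h))) * h" by simp
    also have "\<dots> \<le> exp W * h"
    proof -
      have "ln (max 1 (KQ / h)) \<le> W" by (simp add: W_def)
      then show ?thesis using h by (intro mult_right_mono) (simp_all only: exp_le_cancel_iff less_imp_le)
    qed
    also have "\<dots> \<le> exp W * v (poly P x)" using \<open>h \<le> v (poly P x)\<close> by simp
    finally show ?thesis using KQ(2)[OF x(1) x1] by linarith
  qed
  moreover have "0 < r" using h KP(1) by (simp add: r_def)
  ultimately show ?thesis by (intro that[of r W]) (auto simp: W_def)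
qed

lemma large_parameter_constant:
  assumes d: "2 \<le> d" and A: "qbar_poly A" "A \<noteq> 0" and B: "qbar_poly B" "B \<noteq> 0"
  obtains R K where "1 \<le> R" "1 \<le> K"
    "\<And>x. algebraic x \<Longrightarrow> R \<le> v x \<Longrightarrow>
       v x ^ 2 * v (poly A x * poly B x ^ (d - 1)) ^ d \<le> K * v (poly A x ^ d + x * poly B x ^ d) ^ d"
proof -
  obtain cA CA RA where cA: "0 < cA" "0 < CA" "1 \<le> RA"
    and A_bounds: "\<And>x. algebraic x \<Longrightarrow> RA \<le> v x \<Longrightarrow>
      cA * v x ^ degree A \<le> v (poly A x) \<and> v (poly A x) \<le> CA * v x ^ degree A"
    using poly_comparable_to_leading_term[OF A] by blast
  obtain cB CB RB where cB: "0 < cB" "0 < CB" "1 \<le> RB"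
    and B_bounds: "\<And>x. algebraic x \<Longrightarrow> RB \<le> v x \<Longrightarrow>
      cB * v x ^ degree B \<le> v (poly B x) \<and> v (poly B x) \<le> CB * v x ^ degree B"
    using poly_comparable_to_leading_term[OF B] by blast
  define R where "R = max (max RA RB) (max (2 * CB ^ d / cA ^ d) (2 * CA ^ d / cB ^ d))"
  define K where "K = max 1 ((CA * CB ^ (d - 1)) ^ d / (min (cA ^ d) (cB ^ d) / 2) ^ d)"
  have bound: "v x ^ 2 * v (poly A x * poly B x ^ (d - 1)) ^ d \<le> K * v (poly A x ^ d + x * poly B x ^ d) ^ d"
    if x: "algebraic x" "R \<le> v x" for x
  proof -
    have t: "1 \<le> v x" "RA \<le> v x" "RB \<le> v x" "2 * CB ^ d \<le> cA ^ d * v x" "2 * CA ^ d \<le> cB ^ d * v x"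
      using x(2) cA cB by (auto simp: R_def field_simps)
    have "\<bar>v (poly A x) ^ d - v x * v (poly B x) ^ d\<bar> \<le> v (poly A x ^ d + x * poly B x ^ d)"
      using v_reverse_triangle[of "poly A x ^ d" "x * poly B x ^ d"] x A B by (simp add: v_mult v_power)
    then have "v x ^ 2 * (v (poly A x) * v (poly B x) ^ (d - 1)) ^ d
        \<le> (CA * CB ^ (d - 1)) ^ d / (min (cA ^ d) (cB ^ d) / 2) ^ d * v (poly A x ^ d + x * poly B x ^ d) ^ d"
      using A_bounds[OF x(1) t(2)] B_bounds[OF x(1) t(3)] cA cB d t
      by (intro monomial_comparison) auto
    also have "\<dots> \<le> K * v (poly A x ^ d + x * poly B x ^ d) ^ d"
      using x A B by (intro mult_right_mono) (auto simp: K_def v_nonneg)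
    finally show ?thesis using x A B by (simp add: v_mult v_power)
  qed
  have "1 \<le> R" using cA by (simp add: R_def le_max_iff_disj)
  moreover have "1 \<le> K" by (simp add: K_def)
  ultimately show ?thesis using bound by (rule that)
qed

end

section \<open>Uniform bounds and the limit\<close>

lemma real_le_two_mult_power:
  fixes \<rho> :: real
  assumes "3 / 2 \<le> \<rho>"
  shows "real n \<le> 2 * \<rho> ^ n"
proof -
  have "1 + real n * (\<rho> - 1) \<le> (1 + (\<rho> - 1)) ^ n"
    using assms by (intro Bernoulli_inequality) simp
  moreover have "real n * (1 / 2) \<le> real n * (\<rho> - 1)" using assms by (intro mult_left_mono) auto
  ultimately show ?thesis by simp
qed

context orbit
begin

lemma log_defect_generic: "\<bar>ln (M (Suc n)) - real d * ln (M n)\<bar> \<le> ln (2 * max (v lam) (1 / v lam))"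
  by (rule log_defect_le[OF power_comparable_generic])

lemma log_defect_small_parameter:
  assumes "v lam \<le> 1" "2 \<le> W" "v (b 0) \<le> exp W * v (a 0)"
  shows "\<bar>ln (M (Suc n)) - real d * ln (M n)\<bar> \<le> ln 4 + real d * W * (real d - 1 / 2) ^ n"
  using log_defect_le[OF power_comparable_small_parameter[OF assms]] by (simp add: ln_mult ln_realpow mult.assoc)

lemma log_defect_large_parameter:
  assumes "1 \<le> v lam" "1 \<le> K" "v lam ^ 2 * v (b 0) ^ d \<le> K * v (a 0) ^ d"
  shows "\<bar>ln (M (Suc n)) - real d * ln (M n)\<bar> \<le> ln (4 * K) + 2 * real d * ln 2 * (real d - 1 / 2) ^ n"
proof -
  have "\<bar>ln (M (Suc n)) - real d * ln (M n)\<bar> \<le> ln (4 * K) + real d * real n * ln 2"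
    using log_defect_le[OF power_comparable_large_parameter[OF assms]] assms(2)
    by (simp add: ln_mult ln_realpow)
  also have "real d * real n * ln 2 \<le> real d * (2 * (real d - 1 / 2) ^ n) * ln 2"
    using d real_le_two_mult_power[of "real d - 1 / 2" n] by (intro mult_right_mono mult_left_mono) auto
  finally show ?thesis by (simp add: mult_ac)
qed

lemma log_defect_uniform:
  assumes r: "0 < r" "r \<le> 1" and W: "2 \<le> W" and R: "1 \<le> R" and K: "1 \<le> K"
    and small: "v lam \<le> r \<Longrightarrow> v (b 0) \<le> exp W * v (a 0)"
    and large: "R \<le> v lam \<Longrightarrow> v lam ^ 2 * v (b 0) ^ d \<le> K * v (a 0) ^ d"
  shows "\<bar>ln (M (Suc n)) - real d * ln (M n)\<bar>
    \<le> max (ln 4) (max (ln (4 * K)) (ln (2 * max R (1 / r)))) + max (real d * W) (2 * real d * ln 2) * (real d - 1 / 2) ^ n"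
    (is "_ \<le> ?K + ?\<mu> * _")
proof -
  have \<rho>: "0 \<le> (real d - 1 / 2) ^ n" using d by simp
  consider "v lam \<le> r" | "R \<le> v lam" | "r < v lam" "v lam < R" by linarith
  then show ?thesis
  proof cases
    case 1
    then have "\<bar>ln (M (Suc n)) - real d * ln (M n)\<bar> \<le> ln 4 + real d * W * (real d - 1 / 2) ^ n"
      using r small by (intro log_defect_small_parameter W) auto
    also have "\<dots> \<le> ?K + ?\<mu> * (real d - 1 / 2) ^ n"
      using \<rho> by (intro add_mono mult_right_mono) auto
    finally show ?thesis .
  next
    case 2
    then have "\<bar>ln (M (Suc n)) - real d * ln (M n)\<bar> \<le> ln (4 * K) + 2 * real d * ln 2 * (real d - 1 / 2) ^ n"
      using R K large by (intro log_defect_large_parameter) auto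
    also have "\<dots> \<le> ?K + ?\<mu> * (real d - 1 / 2) ^ n"
      using \<rho> by (intro add_mono mult_right_mono) auto
    finally show ?thesis .
  next
    case 3
    have "1 / v lam \<le> 1 / r" using 3 r by (intro divide_left_mono) auto
    then have "2 * max (v lam) (1 / v lam) \<le> 2 * max R (1 / r)"
      using 3 by (auto intro: max.mono)
    then have "ln (2 * max (v lam) (1 / v lam)) \<le> ln (2 * max R (1 / r))"
      using v_lam_pos by (intro ln_mono) (auto simp: less_max_iff_disj)
    moreover have "0 \<le> ?\<mu> * (real d - 1 / 2) ^ n"
      using W \<rho> by (intro mult_nonneg_nonneg) (auto simp: le_max_iff_disj)
    ultimately show ?thesis using log_defect_generic[of n] by linarith
  qed
qed

end

lemma convergent_log_growth:
  fixes M :: "nat \<Rightarrow> real" and d :: nat and K \<mu> \<rho> :: real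
  assumes d: "1 < d" and \<rho>: "0 \<le> \<rho>" "\<rho> < d"
    and defect: "\<And>n. \<bar>ln (M (Suc (Suc n))) - real d * ln (M (Suc n))\<bar> \<le> K + \<mu> * \<rho> ^ n"
  shows "\<exists>L. (\<lambda>n. ln (M n) / real d ^ n) \<longlonglongrightarrow> L \<and>
    \<bar>L - ln (M 2) / real d ^ 2\<bar> \<le> (\<Sum>j. (K + \<mu> * \<rho> ^ (j + 1)) / real d ^ (j + 3))"
proof -
  define f where "f n = ln (M n) / real d ^ n" for n
  define h where "h j = f (j + 3) - f (j + 2)" for j
  define B where "B j = (K + \<mu> * \<rho> ^ (j + 1)) / real d ^ (j + 3)" for j
  have d0: "0 < real d" using d by simp
  have h_le: "norm (h j) \<le> B j" for j
  proof -
    have "h j = (ln (M (Suc (Suc (j + 1)))) - real d * ln (M (Suc (j + 1)))) / real d ^ (j + 3)"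
      using d0 by (simp add: h_def f_def field_simps eval_nat_numeral)
    then show ?thesis unfolding B_def using defect[of "j + 1"] d0 by (simp add: divide_right_mono)
  qed
  have "summable B"
  proof -
    have B: "B = (\<lambda>j. K / real d ^ 3 * (1 / real d) ^ j + \<mu> * \<rho> / real d ^ 3 * (\<rho> / real d) ^ j)"
      by (auto simp: B_def add_divide_distrib power_add power_divide mult_ac)
    show ?thesis unfolding B using d \<rho> d0 by (intro summable_add summable_mult summable_geometric) auto
  qed
  then have h: "summable h" "summable (\<lambda>j. norm (h j))"
    using h_le by (auto intro: summable_comparison_test')
  have "f (j + 2) = f 2 + (\<Sum>i<j. h i)" for j
    by (induction j) (auto simp: h_def eval_nat_numeral)
  moreover have "(\<lambda>j. f 2 + (\<Sum>i<j. h i)) \<longlonglongrightarrow> f 2 + suminf h"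
    by (intro tendsto_add tendsto_const summable_LIMSEQ h)
  ultimately have "(\<lambda>j. f (j + 2)) \<longlonglongrightarrow> f 2 + suminf h" by simp
  then have "f \<longlonglongrightarrow> f 2 + suminf h" by (rule LIMSEQ_offset)
  moreover have "\<bar>suminf h\<bar> \<le> suminf B"
    using summable_norm[OF h(2)] suminf_le[OF h_le h(2) \<open>summable B\<close>] by simp
  ultimately show ?thesis unfolding f_def B_def by (intro exI[of _ "f 2 + suminf h"]) (simp add: f_def)
qed

context abs_value
begin

lemma level_one_large_parameter:
  assumes d: "2 \<le> d" and A: "qbar_poly A" "A \<noteq> 0" and B: "qbar_poly B" "B \<noteq> 0"
  obtains R K where "1 \<le> R" "1 \<le> K"
    "\<And>x. algebraic x \<Longrightarrow> x \<noteq> 0 \<Longrightarrow> R \<le> v x \<Longrightarrow>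
       v x ^ 2 * v (poly (Bcn d A B 1) x) ^ d \<le> K * v (poly (Acn d A B 1) x) ^ d"
proof -
  obtain R K where RK: "1 \<le> R" "1 \<le> K" and bound: "\<And>x. algebraic x \<Longrightarrow> R \<le> v x \<Longrightarrow>
       v x ^ 2 * v (poly A x * poly B x ^ (d - 1)) ^ d \<le> K * v (poly A x ^ d + x * poly B x ^ d) ^ d"
    using large_parameter_constant[OF d A B] by blast
  have "v x ^ 2 * v (poly (Bcn d A B 1) x) ^ d \<le> K * v (poly (Acn d A B 1) x) ^ d"
    if x: "algebraic x" "x \<noteq> 0" "R \<le> v x" for x
  proof -
    from d have "1 \<le> d" by simp
    then obtain s where s: "s = 1 \<or> s = x"
      "s * poly (Acn d A B 1) x = poly A x ^ d + x * poly B x ^ d"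
      "s * poly (Bcn d A B 1) x = poly A x * poly B x ^ (d - 1)"
      by (rule level_one_scaling)
    have alg: "algebraic s" "algebraic (poly (Acn d A B 1) x)" "algebraic (poly (Bcn d A B 1) x)"
      using s(1) x qbar_poly_Acn_Bcn[OF A(1) B(1) \<open>1 \<le> d\<close>] by auto
    have "v s ^ d * (v x ^ 2 * v (poly (Bcn d A B 1) x) ^ d) \<le> v s ^ d * (K * v (poly (Acn d A B 1) x) ^ d)"
      using bound[OF x(1) x(3)] alg unfolding s(2,3)[symmetric] by (simp add: v_mult power_mult_distrib mult_ac)
    moreover have "0 < v s ^ d" using s(1) x alg by (auto simp: v_pos)
    ultimately show ?thesis by simp
  qed
  with RK show ?thesis by (rule that)
qed

lemma uniform_log_defect_bound:
  assumes d: "2 \<le> d" and A: "qbar_poly A" "A \<noteq> 0" and B: "qbar_poly B" "B \<noteq> 0" and "coprime A B"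
  obtains K \<mu> where "\<And>lam n. algebraic lam \<Longrightarrow> lam \<noteq> 0 \<Longrightarrow> poly A lam \<noteq> 0 \<Longrightarrow> poly B lam \<noteq> 0 \<Longrightarrow>
    \<bar>ln (Mnv v d A B lam (Suc (Suc n))) - real d * ln (Mnv v d A B lam (Suc n))\<bar> \<le> K + \<mu> * (real d - 1 / 2) ^ n"
proof -
  have level_one: "qbar_poly (Acn d A B 1)" "qbar_poly (Bcn d A B 1)" "poly (Acn d A B 1) 0 \<noteq> 0"
    using qbar_poly_Acn_Bcn[OF A(1) B(1)] poly_Acn_1_at_0_nonzero[OF assms(6) d] d by auto
  obtain r W where r: "0 < r" "2 \<le> W" and small: "\<And>x. algebraic x \<Longrightarrow> v x \<le> r \<Longrightarrow>
      v (poly (Bcn d A B 1) x) \<le> exp W * v (poly (Acn d A B 1) x)"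
    using ratio_bounded_near_zero[OF level_one(1,3,2)] by blast
  obtain R K where R: "1 \<le> R" "1 \<le> K" and large: "\<And>x. algebraic x \<Longrightarrow> x \<noteq> 0 \<Longrightarrow> R \<le> v x \<Longrightarrow>
      v x ^ 2 * v (poly (Bcn d A B 1) x) ^ d \<le> K * v (poly (Acn d A B 1) x) ^ d"
    using level_one_large_parameter[OF d A B] by blast
  define r' where "r' = min r 1"
  have r': "0 < r'" "r' \<le> 1" "r' \<le> r" using r by (auto simp: r'_def)
  show ?thesis
  proof (rule that)
    fix lam n assume lam: "algebraic lam" "lam \<noteq> 0" "poly A lam \<noteq> 0" "poly B lam \<noteq> 0"
    interpret orbit v d lam "\<lambda>n. poly (Acn d A B (Suc n)) lam" "\<lambda>n. poly (Bcn d A B (Suc n)) lam"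
      using orbit_of_parameter[OF d A(1) lam(3) B(1) lam(4) lam(1,2)] .
    have "Mnv v d A B lam (Suc k) = M k" for k by (simp add: Mnv_def M_def)
    then show "\<bar>ln (Mnv v d A B lam (Suc (Suc n))) - real d * ln (Mnv v d A B lam (Suc n))\<bar>
        \<le> max (ln 4) (max (ln (4 * K)) (ln (2 * max R (1 / r')))) + max (real d * W) (2 * real d * ln 2) * (real d - 1 / 2) ^ n"
      using log_defect_uniform[OF r'(1,2) r(2) R] small[OF lam(1)] large[OF lam(1,2)] r'(3)
      by (simp add: One_nat_def)
  qed
qed

end

theorem proposition6p5:
  fixes d :: nat and A B :: "complex poly" and v :: "complex \<Rightarrow> real"
  assumes "d \<ge> 2"
    and "qbar_poly A" and "qbar_poly B"
    and "A \<noteq> 0" and "B \<noteq> 0"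
    and "coprime A B"
    and "\<not> (\<exists>k. A = smult k B)"
    and "abs_value_qbar v"
  shows "\<exists>C::real. \<forall>lam. algebraic lam \<and> lam \<noteq> 0 \<and> poly A lam \<noteq> 0 \<and> poly B lam \<noteq> 0 \<longrightarrow>
           (\<exists>L. (\<lambda>n. ln (Mnv v d A B lam n) / real d ^ n) \<longlonglongrightarrow> L \<and>
                \<bar>L - ln (Mnv v d A B lam 2) / real d ^ 2\<bar> \<le> C)"
proof -
  interpret abs_value v by unfold_locales (rule assms(8))
  obtain K \<mu> where defect: "\<And>lam n. algebraic lam \<Longrightarrow> lam \<noteq> 0 \<Longrightarrow> poly A lam \<noteq> 0 \<Longrightarrow> poly B lam \<noteq> 0 \<Longrightarrow>
      \<bar>ln (Mnv v d A B lam (Suc (Suc n))) - real d * ln (Mnv v d A B lam (Suc n))\<bar> \<le> K + \<mu> * (real d - 1 / 2) ^ n"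
    using uniform_log_defect_bound[OF assms(1,2,4,3,5,6)] by blast
  define C where "C = (\<Sum>j. (K + \<mu> * (real d - 1 / 2) ^ (j + 1)) / real d ^ (j + 3))"
  have "\<exists>L. (\<lambda>n. ln (Mnv v d A B lam n) / real d ^ n) \<longlonglongrightarrow> L \<and> \<bar>L - ln (Mnv v d A B lam 2) / real d ^ 2\<bar> \<le> C"
    if "algebraic lam \<and> lam \<noteq> 0 \<and> poly A lam \<noteq> 0 \<and> poly B lam \<noteq> 0" for lam
    unfolding C_def using that assms(1) by (intro convergent_log_growth defect) auto
  then show ?thesis by blast
qed

end
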